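(* Let $m \geq 5$ be an odd integer. The digraph $H_{2m}$ admits a $\vec{C}_m$-factorization (in fact one consisting of four $\vec{C}_m$-factors).
   Context: $H_{2m} = \vec{X}(m,\{\pm 1\}) \wr \overline{K}_2$ is the digraph with vertex set $\{x_a, y_a : a \in \mathbb{Z}_m\}$ whose arcs are exactly $(u_a, v_b)$ for all $u, v \in \{x, y\}$ and all $a, b \in \mathbb{Z}_m$ with $b - a \equiv \pm 1 \pmod m$. (Here $\vec{X}(m,D)$ is the directed circulant on $\mathbb{Z}_m$ with arcs $(a,b)$ whenever $b-a \in D$ modulo $m$, $\overline{K}_2$ is the empty graph on two vertices $\{x,y\}$, and the wreath product $G \wr H$ has vertex set $V(G)\times V(H)$ with an arc from $(g_1,h_1)$ to $(g_2,h_2)$ iff $(g_1,g_2)\in A(G)$, or $g_1=g_2$ and $(h_1,h_2)\in A(H)$; we write $x_a=(a,x)$, $y_a=(a,y)$.) A $\vec{C}_m$-factor of a digraph is a spanning subdigraph that is a disjoint union of directed $m$-cycles; a $\vec{C}_m$-factorization is a partition of the arc set into $\vec{C}_m$-factors. *)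

theory Defs
  imports Main
begin

text \<open>Vertices of H_{2m} are pairs (a, u) with a \<in> {0..<m} (representing Z_m)
and u :: bool (False = x, True = y), so x_a = (a, False), y_a = (a, True).\<close>

definition H_verts :: "nat \<Rightarrow> (nat \<times> bool) set" where
  "H_verts m = {0..<m} \<times> UNIV"

definition H_arcs :: "nat \<Rightarrow> ((nat \<times> bool) \<times> (nat \<times> bool)) set" where
  "H_arcs m = {((a, u), (b, v)). a < m \<and> b < m \<and>
      (b = (a + 1) mod m \<or> a = (b + 1) mod m)}"

definition is_dicycle :: "nat \<Rightarrow> ('v \<times> 'v) set \<Rightarrow> bool" where
  "is_dicycle m C \<longleftrightarrow> (\<exists>vs. length vs = m \<and> distinct vs \<and>
      C = {(vs ! i, vs ! ((i + 1) mod m)) | i. i < m})"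

definition arc_verts :: "('v \<times> 'v) set \<Rightarrow> 'v set" where
  "arc_verts C = fst ` C \<union> snd ` C"

definition is_Cm_factor :: "nat \<Rightarrow> 'v set \<Rightarrow> ('v \<times> 'v) set \<Rightarrow> ('v \<times> 'v) set \<Rightarrow> bool" where
  "is_Cm_factor m V A F \<longleftrightarrow> F \<subseteq> A \<and>
     (\<exists>Cs. (\<forall>C\<in>Cs. is_dicycle m C) \<and>
           (\<forall>C\<in>Cs. \<forall>D\<in>Cs. C \<noteq> D \<longrightarrow> arc_verts C \<inter> arc_verts D = {}) \<and>
           \<Union>(arc_verts ` Cs) = V \<and>
           \<Union>Cs = F)"

definition is_Cm_factorization :: "nat \<Rightarrow> 'v set \<Rightarrow> ('v \<times> 'v) set \<Rightarrow> ('v \<times> 'v) set set \<Rightarrow> bool" where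
  "is_Cm_factorization m V A Fs \<longleftrightarrow>
     (\<forall>F\<in>Fs. is_Cm_factor m V A F) \<and>
     (\<forall>F\<in>Fs. \<forall>G\<in>Fs. F \<noteq> G \<longrightarrow> F \<inter> G = {}) \<and>
     \<Union>Fs = A"

end

theory Submission
  imports Defs
begin

text \<open>Choosing one of the two vertices of every column a of H_{2m} gives a selection s.
The selected vertices, traversed forward around Z_m, and the unselected ones, traversed
backward, are two vertex-disjoint directed m-cycles, hence a C_m-factor. The forward arcs
between columns a and a+1 are indexed by pairs of booleans, so the factors of a family of
selections S_t partition the arcs precisely when t \<mapsto> (S_t a, S_t (a+1)) is a bijection
onto bool \<times> bool for every column a. For t ranging over GF(2)^2 such a family is obtained
by evaluating at t a linear form attached to each column: the three nonzero forms properly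
colour the columns of the cycle, and any two distinct ones are linearly independent.\<close>

lemma is_dicycle_iff_inj_on:
  "is_dicycle m C \<longleftrightarrow> (\<exists>g. inj_on g {..<m} \<and> C = (\<lambda>i. (g i, g ((i + 1) mod m))) ` {..<m})"
proof -
  have image_form: "{(g i, g ((i + 1) mod m)) | i. i < m} = (\<lambda>i. (g i, g ((i + 1) mod m))) ` {..<m}"
    for g :: "nat \<Rightarrow> 'a"
    by auto
  have nth_map: "(\<lambda>i. (map g [0..<m] ! i, map g [0..<m] ! ((i + 1) mod m))) ` {..<m} =
      (\<lambda>i. (g i, g ((i + 1) mod m))) ` {..<m}" for g :: "nat \<Rightarrow> 'a"
    by (rule image_cong) auto
  show ?thesis
  proof
    assume "is_dicycle m C"
    then obtain vs where "length vs = m" "distinct vs"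
      and "C = (\<lambda>i. (vs ! i, vs ! ((i + 1) mod m))) ` {..<m}"
      unfolding is_dicycle_def image_form by blast
    then show "\<exists>g. inj_on g {..<m} \<and> C = (\<lambda>i. (g i, g ((i + 1) mod m))) ` {..<m}"
      by (intro exI[of _ "(!) vs"] conjI inj_on_nth) auto
  next
    assume "\<exists>g. inj_on g {..<m} \<and> C = (\<lambda>i. (g i, g ((i + 1) mod m))) ` {..<m}"
    then obtain g where "inj_on g {..<m}" "C = (\<lambda>i. (g i, g ((i + 1) mod m))) ` {..<m}"
      by blast
    then show "is_dicycle m C"
      unfolding is_dicycle_def image_form
      by (intro exI[of _ "map g [0..<m]"]) (simp add: nth_map distinct_map lessThan_atLeast0)
  qed
qed

lemma reflect_mod_involution: "(k::nat) < m \<Longrightarrow> (m - (m - k) mod m) mod m = k"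
proof (cases "k = 0")
  case False
  moreover assume "k < m"
  ultimately show ?thesis by simp
qed simp

lemma reflect_mod_succ:
  fixes k m :: nat
  assumes "k < m"
  shows "((m - (k + 1) mod m) mod m + 1) mod m = (m - k) mod m"
proof (cases "k + 1 = m")
  case True
  then have "m - k = 1" by simp
  then show ?thesis using True by simp
next
  case False
  with assms have "(k + 1) mod m = k + 1" "m - (k + 1) + 1 = m - k" by simp_all
  moreover have "m - (k + 1) < m" using assms by simp
  ultimately show ?thesis by simp
qed

lemma is_dicycle_converse:
  assumes "is_dicycle m C"
  shows "is_dicycle m (C\<inverse>)"
proof -
  obtain g where g: "inj_on g {..<m}" and C: "C = (\<lambda>i. (g i, g ((i + 1) mod m))) ` {..<m}"
    using assms is_dicycle_iff_inj_on by blast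
  \<comment> \<open>vertex k of the reversed cycle is vertex -k of the original one\<close>
  define r where "r k = (m - k) mod m" for k
  define \<sigma> where "\<sigma> k = r ((k + 1) mod m)" for k
  have r_inv: "r (r k) = k" if "k < m" for k
    using that reflect_mod_involution by (simp add: r_def)
  have \<sigma>_succ: "(\<sigma> k + 1) mod m = r k" if "k < m" for k
    using that reflect_mod_succ by (simp add: r_def \<sigma>_def)
  have "\<sigma> ` {..<m} \<subseteq> {..<m}"
    by (auto simp: \<sigma>_def r_def)
  moreover have "inj_on \<sigma> {..<m}"
    by (rule inj_onI) (metis \<sigma>_succ lessThan_iff r_inv)
  ultimately have \<sigma>_surj: "\<sigma> ` {..<m} = {..<m}"
    by (simp add: endo_inj_surj)
  have "C\<inverse> = (\<lambda>i. (g ((i + 1) mod m), g i)) ` {..<m}"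
    unfolding C by auto
  also have "\<dots> = (\<lambda>k. (g ((\<sigma> k + 1) mod m), g (\<sigma> k))) ` {..<m}"
    by (subst \<sigma>_surj[symmetric]) (simp add: image_image)
  also have "\<dots> = (\<lambda>k. ((g \<circ> r) k, (g \<circ> r) ((k + 1) mod m))) ` {..<m}"
  proof (rule image_cong)
    fix k assume "k \<in> {..<m}"
    then show "(g ((\<sigma> k + 1) mod m), g (\<sigma> k)) = ((g \<circ> r) k, (g \<circ> r) ((k + 1) mod m))"
      using \<sigma>_succ[of k] unfolding \<sigma>_def by simp
  qed simp
  finally have "C\<inverse> = (\<lambda>k. ((g \<circ> r) k, (g \<circ> r) ((k + 1) mod m))) ` {..<m}" .
  moreover have "inj_on (g \<circ> r) {..<m}"
  proof (rule comp_inj_on)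
    show "inj_on r {..<m}" by (metis inj_on_def lessThan_iff r_inv)
    show "inj_on g (r ` {..<m})" using g by (rule inj_on_subset) (auto simp: r_def)
  qed
  ultimately show ?thesis
    unfolding is_dicycle_iff_inj_on by blast
qed

definition selection_cycle :: "nat \<Rightarrow> (nat \<Rightarrow> bool) \<Rightarrow> ((nat \<times> bool) \<times> (nat \<times> bool)) set" where
  "selection_cycle m s = (\<lambda>a. ((a, s a), ((a + 1) mod m, s ((a + 1) mod m)))) ` {..<m}"

definition selection_factor :: "nat \<Rightarrow> (nat \<Rightarrow> bool) \<Rightarrow> ((nat \<times> bool) \<times> (nat \<times> bool)) set" where
  "selection_factor m s = selection_cycle m s \<union> (selection_cycle m (Not \<circ> s))\<inverse>"

lemma is_dicycle_selection_cycle: "is_dicycle m (selection_cycle m s)"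
  unfolding is_dicycle_iff_inj_on selection_cycle_def
  by (rule exI[of _ "\<lambda>a. (a, s a)"]) (auto intro: inj_onI)

lemma arc_verts_selection_cycle:
  assumes "0 < m"
  shows "arc_verts (selection_cycle m s) = (\<lambda>a. (a, s a)) ` {..<m}"
  using assms unfolding arc_verts_def selection_cycle_def by force

lemma arc_verts_converse: "arc_verts (C\<inverse>) = arc_verts C"
  unfolding arc_verts_def by force

lemma converse_H_arcs: "(H_arcs m)\<inverse> = H_arcs m"
  unfolding H_arcs_def by auto

lemma selection_cycle_subset_H_arcs: "selection_cycle m s \<subseteq> H_arcs m"
  unfolding selection_cycle_def H_arcs_def by auto

lemma selection_factor_subset_H_arcs: "selection_factor m s \<subseteq> H_arcs m"
  unfolding selection_factor_def
  using selection_cycle_subset_H_arcs converse_H_arcs by blast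

lemma is_Cm_factor_selection_factor:
  assumes "0 < m"
  shows "is_Cm_factor m (H_verts m) (H_arcs m) (selection_factor m s)"
  unfolding is_Cm_factor_def
proof (intro conjI exI[of _ "{selection_cycle m s, (selection_cycle m (Not \<circ> s))\<inverse>}"])
  show "selection_factor m s \<subseteq> H_arcs m"
    by (rule selection_factor_subset_H_arcs)
  show "\<forall>C\<in>{selection_cycle m s, (selection_cycle m (Not \<circ> s))\<inverse>}. is_dicycle m C"
    using is_dicycle_selection_cycle is_dicycle_converse by blast
  have verts: "arc_verts (selection_cycle m s) = (\<lambda>a. (a, s a)) ` {..<m}"
    "arc_verts ((selection_cycle m (Not \<circ> s))\<inverse>) = (\<lambda>a. (a, \<not> s a)) ` {..<m}"
    using arc_verts_selection_cycle[OF assms] by (simp_all add: arc_verts_converse)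
  then show "\<forall>C\<in>{selection_cycle m s, (selection_cycle m (Not \<circ> s))\<inverse>}.
      \<forall>D\<in>{selection_cycle m s, (selection_cycle m (Not \<circ> s))\<inverse>}.
        C \<noteq> D \<longrightarrow> arc_verts C \<inter> arc_verts D = {}"
    by auto
  have "(\<lambda>a. (a, s a)) ` {..<m} \<union> (\<lambda>a. (a, \<not> s a)) ` {..<m} = H_verts m"
    unfolding H_verts_def by (auto simp: image_iff)
  then show "\<Union> (arc_verts ` {selection_cycle m s, (selection_cycle m (Not \<circ> s))\<inverse>}) = H_verts m"
    using verts by simp
  show "\<Union> {selection_cycle m s, (selection_cycle m (Not \<circ> s))\<inverse>} = selection_factor m s"
    unfolding selection_factor_def by simp
qed

definition orthogonal_selections :: "nat \<Rightarrow> ('i \<Rightarrow> nat \<Rightarrow> bool) \<Rightarrow> bool" where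
  "orthogonal_selections m S \<longleftrightarrow> (\<forall>a<m. bij (\<lambda>i. (S i a, S i ((a + 1) mod m))))"

lemma succ_mod_succ_mod_neq:
  fixes a m :: nat
  assumes "3 \<le> m" "a < m"
  shows "((a + 1) mod m + 1) mod m \<noteq> a"
proof
  assume "((a + 1) mod m + 1) mod m = a"
  moreover have "((a + 1) mod m + 1) mod m = (a + 2) mod m"
    by (metis mod_add_left_eq add.assoc one_add_one)
  ultimately have "(a + 2) mod m = a mod m"
    using assms(2) by simp
  then have "m dvd 2"
    using mod_eq_dvd_iff_nat[of a "a + 2" m] by simp
  then have "m \<le> 2"
    by (rule dvd_imp_le) simp
  with assms(1) show False
    by simp
qed

lemma selection_cycle_disjoint_converse:
  assumes "3 \<le> m"
  shows "selection_cycle m s \<inter> (selection_cycle m t)\<inverse> = {}"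
proof (rule equals0I)
  fix e assume "e \<in> selection_cycle m s \<inter> (selection_cycle m t)\<inverse>"
  then obtain a b where "a < m" and
    "((a, s a), ((a + 1) mod m, s ((a + 1) mod m))) = (((b + 1) mod m, t ((b + 1) mod m)), (b, t b))"
    unfolding selection_cycle_def by blast
  then have "(b + 1) mod m = a" "(a + 1) mod m = b"
    unfolding prod.inject by blast+
  then show False
    using succ_mod_succ_mod_neq[OF assms \<open>a < m\<close>] by metis
qed

lemma selection_cycle_disjoint:
  assumes "\<And>a. a < m \<Longrightarrow> (s a, s ((a + 1) mod m)) \<noteq> (t a, t ((a + 1) mod m))"
  shows "selection_cycle m s \<inter> selection_cycle m t = {}"
proof (rule equals0I)
  fix e assume "e \<in> selection_cycle m s \<inter> selection_cycle m t"
  then obtain a b where "a < m" and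
    "((a, s a), ((a + 1) mod m, s ((a + 1) mod m))) = ((b, t b), ((b + 1) mod m, t ((b + 1) mod m)))"
    unfolding selection_cycle_def by blast
  then show False
    using assms unfolding prod.inject by blast
qed

lemma selection_factor_disjoint:
  assumes "orthogonal_selections m S" "3 \<le> m" "i \<noteq> j"
  shows "selection_factor m (S i) \<inter> selection_factor m (S j) = {}"
proof -
  have pairs: "(S i a, S i ((a + 1) mod m)) \<noteq> (S j a, S j ((a + 1) mod m))" if "a < m" for a
    using assms(1,3) that unfolding orthogonal_selections_def bij_def inj_def by blast
  have "selection_cycle m (S i) \<inter> selection_cycle m (S j) = {}"
    using pairs by (rule selection_cycle_disjoint)
  moreover have "selection_cycle m (Not \<circ> S i) \<inter> selection_cycle m (Not \<circ> S j) = {}"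
    using pairs by (intro selection_cycle_disjoint) auto
  ultimately show ?thesis
    unfolding selection_factor_def
    using selection_cycle_disjoint_converse[OF assms(2)] by blast
qed

lemma Union_selection_factors:
  assumes "orthogonal_selections m S"
  shows "(\<Union>i. selection_factor m (S i)) = H_arcs m"
proof (intro equalityI subsetI)
  fix e assume "e \<in> (\<Union>i. selection_factor m (S i))"
  then show "e \<in> H_arcs m"
    using selection_factor_subset_H_arcs by blast
next
  fix e assume "e \<in> H_arcs m"
  then obtain a u b v where e: "e = ((a, u), (b, v))" "a < m" "b < m"
    and ab: "b = (a + 1) mod m \<or> a = (b + 1) mod m"
    unfolding H_arcs_def by auto
  have surj: "\<exists>i. (S i c, S i ((c + 1) mod m)) = (x, y)" if "c < m" for c x y
  proof -
    from assms that have "bij (\<lambda>i. (S i c, S i ((c + 1) mod m)))"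
      unfolding orthogonal_selections_def by blast
    then have "surj (\<lambda>i. (S i c, S i ((c + 1) mod m)))"
      by (rule bij_is_surj)
    then obtain i where "(x, y) = (S i c, S i ((c + 1) mod m))"
      by (rule surjE)
    then show ?thesis
      by (intro exI[of _ i]) simp
  qed
  from ab obtain i where "e \<in> selection_cycle m (S i) \<or> e \<in> (selection_cycle m (Not \<circ> S i))\<inverse>"
  proof
    assume "b = (a + 1) mod m"
    moreover obtain i where "(S i a, S i ((a + 1) mod m)) = (u, v)"
      using surj[OF e(2)] by blast
    ultimately have "e \<in> selection_cycle m (S i)"
      unfolding selection_cycle_def by (intro rev_image_eqI[of a]) (use e in simp_all)
    then show ?thesis using that by blast
  next
    assume "a = (b + 1) mod m"
    moreover obtain i where "(S i b, S i ((b + 1) mod m)) = (\<not> v, \<not> u)"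
      using surj[OF e(3)] by blast
    ultimately have "((b, v), (a, u)) \<in> selection_cycle m (Not \<circ> S i)"
      unfolding selection_cycle_def by (intro rev_image_eqI[of b]) (use e in simp_all)
    then show ?thesis using that e(1) by blast
  qed
  then show "e \<in> (\<Union>i. selection_factor m (S i))"
    unfolding selection_factor_def by blast
qed

lemma selection_factor_nonempty: "0 < m \<Longrightarrow> selection_factor m s \<noteq> {}"
  unfolding selection_factor_def selection_cycle_def by blast

lemma is_Cm_factorization_selection_factors:
  assumes "3 \<le> m" "orthogonal_selections m S"
  shows "is_Cm_factorization m (H_verts m) (H_arcs m) (range (\<lambda>i. selection_factor m (S i)))"
  unfolding is_Cm_factorization_def
proof (intro conjI ballI impI)
  fix F assume "F \<in> range (\<lambda>i. selection_factor m (S i))"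
  then show "is_Cm_factor m (H_verts m) (H_arcs m) F"
    using is_Cm_factor_selection_factor assms(1) by auto
next
  fix F G assume "F \<in> range (\<lambda>i. selection_factor m (S i))" "G \<in> range (\<lambda>i. selection_factor m (S i))"
    and "F \<noteq> G"
  then obtain i j where "F = selection_factor m (S i)" "G = selection_factor m (S j)" "i \<noteq> j"
    by blast
  then show "F \<inter> G = {}"
    using selection_factor_disjoint[OF assms(2,1)] by simp
next
  show "\<Union> (range (\<lambda>i. selection_factor m (S i))) = H_arcs m"
    using Union_selection_factors[OF assms(2)] .
qed

lemma card_selection_factors:
  fixes S :: "'i \<Rightarrow> nat \<Rightarrow> bool"
  assumes "3 \<le> m" "orthogonal_selections m S"
  shows "card (range (\<lambda>i. selection_factor m (S i))) = 4"
proof -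
  have "inj (\<lambda>i. selection_factor m (S i))"
  proof (rule injI)
    fix i j assume "selection_factor m (S i) = selection_factor m (S j)"
    then show "i = j"
      using selection_factor_disjoint[OF assms(2,1)] selection_factor_nonempty assms(1)
      by (metis Int_absorb gr0I not_numeral_le_zero)
  qed
  then have "card (range (\<lambda>i. selection_factor m (S i))) = card (UNIV :: 'i set)"
    by (rule card_image)
  also have "\<dots> = card (UNIV :: (bool \<times> bool) set)"
  proof (rule bij_betw_same_card)
    have "0 < m" using assms(1) by simp
    with assms(2) show "bij (\<lambda>i. (S i 0, S i ((0 + 1) mod m)))"
      unfolding orthogonal_selections_def by blast
  qed
  also have "\<dots> = 4"
    by (simp add: UNIV_Times_UNIV[symmetric] card_cartesian_product del: UNIV_Times_UNIV)
  finally show ?thesis .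
qed

datatype lin_form = Fst | Snd | Sum

fun eval_lin_form :: "lin_form \<Rightarrow> bool \<times> bool \<Rightarrow> bool" where
  "eval_lin_form Fst (p, q) = p"
| "eval_lin_form Snd (p, q) = q"
| "eval_lin_form Sum (p, q) = (p \<noteq> q)"

lemma bij_eval_lin_form_pair:
  assumes "c \<noteq> d"
  shows "bij (\<lambda>t. (eval_lin_form c t, eval_lin_form d t))"
proof -
  have "inj (\<lambda>t. (eval_lin_form c t, eval_lin_form d t))"
    using assms by (cases c; cases d) (auto simp: inj_def)
  then show ?thesis
    by (simp add: bij_def finite_UNIV_inj_surj)
qed

definition column_form :: "nat \<Rightarrow> lin_form" where
  "column_form a = (if a = 0 then Sum else if odd a then Fst else Snd)"

lemma column_form_neq_succ_mod:
  assumes "2 \<le> m" "a < m"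
  shows "column_form a \<noteq> column_form ((a + 1) mod m)"
proof (cases "a + 1 = m")
  case True
  with assms show ?thesis by (simp add: column_form_def)
next
  case False
  with assms have "(a + 1) mod m = a + 1" by simp
  then show ?thesis by (simp add: column_form_def)
qed

theorem mainTheorem3:
  fixes m :: nat
  assumes "odd m" and "m \<ge> 5"
  shows "\<exists>Fs. is_Cm_factorization m (H_verts m) (H_arcs m) Fs \<and> card Fs = 4"
proof -
  define S where "S t a = eval_lin_form (column_form a) t" for t a
  have "orthogonal_selections m S"
    unfolding orthogonal_selections_def S_def
    using bij_eval_lin_form_pair column_form_neq_succ_mod assms(2) by simp
  moreover have "3 \<le> m" using assms(2) by simp
  ultimately show ?thesis
    using is_Cm_factorization_selection_factors card_selection_factors by blast
qed

end
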